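(* Let $r, a \in \mathbb{N}$ and $b, d \in \mathbb{Z}$ with $a \mid \mathrm{lcm}(b,d)$. Then for any completely multiplicative functions $f_1,\ldots,f_r:\mathbb{N}\to\mathbb{S}^1$, $$\liminf_{n\to\infty} \max_{1\le j\le r} |f_j(an+b)-f_j(an+d)| = 0.$$
   Context: $\mathbb{N}=\{1,2,\dots\}$, $\mathbb{S}^1$ the unit circle in $\mathbb{C}$; completely multiplicative means $f(mn)=f(m)f(n)$ for all $m,n\in\mathbb{N}$. Convention: $\mathrm{lcm}(b,0)=0$. *)

theory Defs
  imports "HOL-Analysis.Analysis"
begin

text \<open>A function on the positive integers, completely multiplicative, with values on the
unit circle. Values at 0 are irrelevant and unconstrained.\<close>
definition compl_mult_unimod :: "(nat \<Rightarrow> complex) \<Rightarrow> bool" where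
  "compl_mult_unimod f \<longleftrightarrow>
     (\<forall>m n. m \<ge> 1 \<longrightarrow> n \<ge> 1 \<longrightarrow> f (m * n) = f m * f n) \<and>
     (\<forall>n. n \<ge> 1 \<longrightarrow> cmod (f n) = 1)"

end

theory Submission
  imports Defs "HOL-Computational_Algebra.Primes"
begin

text \<open>Put \<open>h = b - d > 0\<close> (the case \<open>b = d\<close> is trivial and \<open>b < d\<close> is symmetric).
If \<open>z = y + e\<close>, \<open>P e = (y + h) z\<close> and \<open>Q e = y (z + h)\<close>, then \<open>P - Q = h\<close>, and complete
multiplicativity gives \<open>|f P - f Q| = |R y - R z|\<close> with \<open>R t = f (t + h) \<cdot> conj (f t)\<close>.
By pigeonhole on the unit disc, two of finitely many shifts \<open>c + w\<close>, \<open>w \<in> W\<close>, have all \<open>R\<^sub>j\<close>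
close. The set \<open>W\<close> is built so that \<open>a (w' - w)\<close> divides \<open>w\<close> for \<open>w < w'\<close>, and \<open>c\<close> is chosen
by the Chinese remainder theorem so that \<open>P\<close> and \<open>Q\<close> are integers with \<open>P \<equiv> b\<close> and
\<open>Q \<equiv> d (mod a)\<close>; the hypothesis \<open>a | lcm b d\<close> enters through a coprime factorisation
\<open>a = a\<^sub>1 a\<^sub>2\<close> with \<open>a\<^sub>1 | d\<close> and \<open>a\<^sub>2 | b\<close>.\<close>

lemma exists_set_diff_dvd:
  fixes A :: int
  assumes "A > 0"
  shows "\<exists>W::int set. finite W \<and> card W = K \<and> (\<forall>w\<in>W. w > 0) \<and>
           (\<forall>w\<in>W. \<forall>w'\<in>W. w < w' \<longrightarrow> A * (w' - w) dvd w)"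
proof (induction K)
  case 0
  show ?case by (intro exI[of _ "{}"]) auto
next
  case (Suc K)
  then obtain W where W: "finite W" "card W = K" "\<forall>w\<in>W. w > 0"
    "\<forall>w\<in>W. \<forall>w'\<in>W. w < w' \<longrightarrow> A * (w' - w) dvd w" by blast
  \<comment> \<open>Translate \<open>W\<close> by \<open>L\<close> and adjoin \<open>L\<close>: differences inside \<open>W\<close> are unchanged,
     and every new difference divides \<open>\<Prod>W\<close>.\<close>
  define L where "L = A * \<Prod>W"
  have dvd_prod: "s dvd \<Prod>W" if "s \<in> W" for s
    using W(1) that by (rule dvd_prodI)
  have "L > 0" unfolding L_def using assms W(3) by (simp add: prod_pos)
  define W' where "W' = insert L ((+) L ` W)"
  have "L \<notin> (+) L ` W" using W(3) by auto
  then have "card W' = Suc K" unfolding W'_def using W(1,2) by (simp add: card_image)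
  moreover have "finite W'" unfolding W'_def using W(1) by simp
  moreover have "\<forall>w\<in>W'. w > 0" unfolding W'_def using \<open>L > 0\<close> W(3) by auto
  moreover have "A * (w' - w) dvd w" if ww: "w \<in> W'" "w' \<in> W'" "w < w'" for w w'
  proof (cases "w = L")
    case True
    then obtain s where s: "s \<in> W" "w' = L + s" using ww W(3) unfolding W'_def by auto
    have "A * s dvd L" unfolding L_def using dvd_prod[OF s(1)] by simp
    then show ?thesis using True s by simp
  next
    case False
    then obtain s s' where s: "s \<in> W" "w = L + s" "s' \<in> W" "w' = L + s'"
      using ww W(3) unfolding W'_def by auto
    then have diff: "A * (s' - s) dvd s" using W(4) ww by auto
    then have "s' - s dvd \<Prod>W" using dvd_prod[OF s(1)] dvd_mult_right dvd_trans by blast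
    then have "A * (s' - s) dvd L" unfolding L_def by simp
    then show ?thesis using diff s by simp
  qed
  ultimately show ?case by blast
qed

lemma int_split_coprime_part:
  fixes G m :: int
  assumes "G > 0"
  obtains X Y k where "G = X * Y" "X > 0" "Y > 0" "coprime Y m" "X dvd m ^ k"
  using assms
proof (induction "nat G" arbitrary: G thesis rule: less_induct)
  case less
  show ?case
  proof (cases "coprime G m")
    case True
    then show ?thesis using less.prems by (intro less.prems(1)[of 1 G 0]) auto
  next
    case False
    define g where "g = gcd G m"
    have "g > 0" unfolding g_def using less.prems(2) by simp
    moreover have "g \<noteq> 1" unfolding g_def using False by (simp add: coprime_iff_gcd_eq_1)
    ultimately have "g > 1" by simp
    obtain G' where G': "G = g * G'" unfolding g_def by (meson gcd_dvd1 dvdE)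
    have "G' > 0" using G' \<open>g > 1\<close> less.prems(2) by (simp add: zero_less_mult_iff)
    moreover have "G' < G" using G' \<open>g > 1\<close> \<open>G' > 0\<close> by simp
    ultimately obtain X Y k where XY: "G' = X * Y" "X > 0" "Y > 0" "coprime Y m" "X dvd m ^ k"
      using less.hyps[of G'] by auto
    have "g * X dvd m * m ^ k" using XY(5) unfolding g_def by (intro mult_dvd_mono) auto
    then show ?thesis using less.prems(1)[of "g * X" Y "Suc k"] G' XY \<open>g > 1\<close> by simp
  qed
qed

lemma multiplicity_le_if_dvd_lcm:
  fixes a b d p :: int
  assumes "a dvd lcm b d" "b \<noteq> 0" "d \<noteq> 0" "prime p"
    and "multiplicity p d < multiplicity p a"
  shows "multiplicity p a \<le> multiplicity p b"
proof -
  have "multiplicity p a \<le> multiplicity p (lcm b d)"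
    using assms(1-3) by (intro dvd_imp_multiplicity_le) auto
  also have "\<dots> = max (multiplicity p b) (multiplicity p d)"
    using assms(2-4) by (rule multiplicity_lcm)
  finally show ?thesis using assms(5) by linarith
qed

lemma dvd_lcm_imp_coprime_factors:
  fixes a b d :: int
  assumes "a > 0" "a dvd lcm b d"
  obtains a1 a2 where "a = a1 * a2" "a1 > 0" "a2 > 0" "coprime a1 a2" "a1 dvd d" "a2 dvd b"
proof (cases "b = 0 \<or> d = 0")
  case True
  then show ?thesis using assms(1) that[of a 1] that[of 1 a] by auto
next
  case False
  define g where "g = gcd a d"
  obtain e where ae: "a = g * e" unfolding g_def by (meson gcd_dvd1 dvdE)
  have "g > 0" unfolding g_def using assms(1) by simp
  then have "e > 0" using assms(1) ae by (simp add: zero_less_mult_iff)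
  \<comment> \<open>\<open>Y\<close> collects the primes with \<open>v\<^sub>p(a) \<le> v\<^sub>p(d)\<close>, \<open>X\<close> those with \<open>v\<^sub>p(a) > v\<^sub>p(d)\<close>.\<close>
  obtain X Y k where XY: "a = X * Y" "X > 0" "Y > 0" "coprime Y e" "X dvd e ^ k"
    using int_split_coprime_part[OF assms(1)] by blast
  have "coprime Y X"
    using XY(4,5) coprime_divisors[of Y Y X "e ^ k"] by simp
  have "Y dvd g * e" using XY(1) ae by (metis dvd_triv_right)
  then have "Y dvd g" using XY(4) by (simp add: coprime_dvd_mult_left_iff)
  then have "Y dvd d" unfolding g_def by (meson dvd_trans gcd_dvd2)
  have "X dvd b"
  proof (rule multiplicity_le_imp_dvd)
    fix p :: int assume p: "prime p"
    show "multiplicity p X \<le> multiplicity p b"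
    proof (cases "p dvd X")
      case True
      then have "p dvd e" using XY(5) p dvd_trans prime_dvd_power by blast
      then have "multiplicity p e > 0"
        using prime_multiplicity_gt_zero_iff[OF prime_imp_prime_elem[OF p], of e] \<open>e > 0\<close>
        by blast
      moreover have "multiplicity p a = multiplicity p g + multiplicity p e"
        using ae \<open>g > 0\<close> \<open>e > 0\<close>
          prime_elem_multiplicity_mult_distrib[OF prime_imp_prime_elem[OF p], of g e] by simp
      moreover have "multiplicity p g = min (multiplicity p a) (multiplicity p d)"
        unfolding g_def using False assms(1) p by (simp add: multiplicity_gcd)
      ultimately have "multiplicity p d < multiplicity p a" by linarith
      then have "multiplicity p a \<le> multiplicity p b"
        using multiplicity_le_if_dvd_lcm assms(2) False p by blast
      moreover have "multiplicity p X \<le> multiplicity p a"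
        using XY(1) assms(1) by (intro dvd_imp_multiplicity_le) auto
      ultimately show ?thesis by linarith
    qed (simp add: not_dvd_imp_multiplicity_0)
  qed (use XY(2) in simp)
  show ?thesis
    using that[of Y X] XY \<open>coprime Y X\<close> \<open>Y dvd d\<close> \<open>X dvd b\<close> by (simp add: mult.commute)
qed

lemma floor_eq_imp_abs_diff_less:
  fixes x y M :: real
  assumes "M > 0" "\<lfloor>M * x\<rfloor> = \<lfloor>M * y\<rfloor>"
  shows "\<bar>x - y\<bar> < 1 / M"
proof -
  have "\<bar>M * x - M * y\<bar> < 1"
    using assms(2) floor_correct[of "M * x"] floor_correct[of "M * y"] by linarith
  then have "M * \<bar>x - y\<bar> < 1" using assms(1) by (simp add: abs_mult flip: right_diff_distrib)
  then show ?thesis using assms(1) by (simp add: field_simps)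
qed

lemma pigeonhole_unit_disc:
  fixes J :: "'j set" and \<epsilon> :: real
  assumes "finite J" "\<epsilon> > 0"
  obtains K where "\<And>S (g :: 'j \<Rightarrow> 'a::linorder \<Rightarrow> complex). finite S \<Longrightarrow> card S \<ge> K \<Longrightarrow>
      (\<And>j s. j \<in> J \<Longrightarrow> s \<in> S \<Longrightarrow> cmod (g j s) \<le> 1) \<Longrightarrow>
      \<exists>s\<in>S. \<exists>t\<in>S. s < t \<and> (\<forall>j\<in>J. cmod (g j s - g j t) < \<epsilon>)"
proof -
  define M :: nat where "M = nat \<lceil>2 / \<epsilon>\<rceil> + 1"
  have "M > 0" unfolding M_def by simp
  have "2 / \<epsilon> \<le> real M" unfolding M_def by linarith
  then have M_eps: "2 / real M \<le> \<epsilon>" using assms(2) \<open>M > 0\<close> by (simp add: field_simps)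
  define Cells where "Cells = PiE J (\<lambda>_. {- int M..int M} \<times> {- int M..int M})"
  have "finite Cells" unfolding Cells_def using assms(1) by (intro finite_PiE) auto
  have floor_in: "\<lfloor>real M * x\<rfloor> \<in> {- int M..int M}" if "\<bar>x\<bar> \<le> 1" for x
  proof -
    have "\<bar>real M * x\<bar> \<le> real M" using that by (simp add: abs_mult mult_left_le)
    then show ?thesis by (auto simp: le_floor_iff floor_le_iff)
  qed
  show ?thesis
  proof (rule that[of "Suc (card Cells)"])
    fix S and g :: "'j \<Rightarrow> 'a \<Rightarrow> complex"
    assume S: "finite S" "card S \<ge> Suc (card Cells)"
      and g: "\<And>j s. j \<in> J \<Longrightarrow> s \<in> S \<Longrightarrow> cmod (g j s) \<le> 1"
    define cell where
      "cell s = restrict (\<lambda>j. (\<lfloor>M * Re (g j s)\<rfloor>, \<lfloor>M * Im (g j s)\<rfloor>)) J" for s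
    have "cell s \<in> Cells" if "s \<in> S" for s
    proof -
      have "\<bar>Re (g j s)\<bar> \<le> 1 \<and> \<bar>Im (g j s)\<bar> \<le> 1" if "j \<in> J" for j
        using g[OF that \<open>s \<in> S\<close>] abs_Re_le_cmod abs_Im_le_cmod order_trans by metis
      then show ?thesis unfolding Cells_def cell_def using floor_in by (auto simp: restrict_PiE_iff)
    qed
    then have "card (cell ` S) \<le> card Cells" by (intro card_mono[OF \<open>finite Cells\<close>]) blast
    then have "card (cell ` S) < card S" using S(2) by linarith
    then obtain s t where st: "s \<in> S" "t \<in> S" "s \<noteq> t" "cell s = cell t"
      using pigeonhole unfolding inj_on_def by blast
    have "cmod (g j s - g j t) < \<epsilon>" if "j \<in> J" for j
    proof -
      have "\<lfloor>M * Re (g j s)\<rfloor> = \<lfloor>M * Re (g j t)\<rfloor>" "\<lfloor>M * Im (g j s)\<rfloor> = \<lfloor>M * Im (g j t)\<rfloor>"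
        using fun_cong[OF st(4), of j] that unfolding cell_def by auto
      then have "\<bar>Re (g j s - g j t)\<bar> < 1 / M" "\<bar>Im (g j s - g j t)\<bar> < 1 / M"
        using floor_eq_imp_abs_diff_less \<open>M > 0\<close> by simp_all
      then have "cmod (g j s - g j t) < 2 / M" using cmod_le[of "g j s - g j t"] by simp
      then show ?thesis using M_eps by linarith
    qed
    then show "\<exists>s\<in>S. \<exists>t\<in>S. s < t \<and> (\<forall>j\<in>J. cmod (g j s - g j t) < \<epsilon>)"
      using st(1-3) by (metis linorder_neqE norm_minus_commute)
  qed
qed

lemma compl_mult_unimod_mult:
  assumes "compl_mult_unimod F" "s > 0" "t > 0"
  shows "F (nat (s * t)) = F (nat s) * F (nat t)"
  using assms by (simp add: compl_mult_unimod_def nat_mult_distrib)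

lemma compl_mult_unimod_norm:
  assumes "compl_mult_unimod F" "t > 0"
  shows "cmod (F (nat t)) = 1"
  using assms by (simp add: compl_mult_unimod_def)

lemma compl_mult_unimod_mult_cnj:
  assumes "compl_mult_unimod F" "t > 0"
  shows "F (nat t) * cnj (F (nat t)) = 1"
  using compl_mult_unimod_norm[OF assms] by (simp add: complex_norm_square[symmetric])

definition shift_ratio :: "(nat \<Rightarrow> complex) \<Rightarrow> int \<Rightarrow> int \<Rightarrow> complex" where
  "shift_ratio F h t = F (nat (t + h)) * cnj (F (nat t))"

lemma shift_ratio_norm:
  assumes "compl_mult_unimod F" "t > 0" "h \<ge> 0"
  shows "cmod (shift_ratio F h t) = 1"
  using assms by (simp add: shift_ratio_def norm_mult compl_mult_unimod_norm)

lemma compl_mult_unimod_diff_eq_shift_ratio_diff: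
  fixes y e h P Q :: int
  assumes F: "compl_mult_unimod F" and "y > 0" "e > 0" "h \<ge> 0"
    and P: "P * e = (y + h) * (y + e)" and Q: "Q * e = y * (y + e + h)"
  shows "cmod (F (nat P) - F (nat Q)) = cmod (shift_ratio F h y - shift_ratio F h (y + e))"
proof -
  define z where "z = y + e"
  have pos: "y + h > 0" "z > 0" "z + h > 0" using assms(2-4) unfolding z_def by auto
  have "P * e > 0" "Q * e > 0" using P Q pos \<open>y > 0\<close> unfolding z_def by simp_all
  then have "P > 0" "Q > 0" using \<open>e > 0\<close> by (simp_all add: zero_less_mult_iff)
  have shift: "F (nat (t + h)) = shift_ratio F h t * F (nat t)" if "t > 0" for t
    using compl_mult_unimod_mult_cnj[OF F that] by (simp add: shift_ratio_def mult.assoc mult.commute)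
  have "cmod (F (nat P) - F (nat Q)) = cmod ((F (nat P) - F (nat Q)) * F (nat e))"
    using compl_mult_unimod_norm[OF F \<open>e > 0\<close>] by (simp add: norm_mult)
  also have "(F (nat P) - F (nat Q)) * F (nat e) = F (nat (y + h)) * F (nat z) - F (nat y) * F (nat (z + h))"
    using compl_mult_unimod_mult[OF F] P Q pos \<open>P > 0\<close> \<open>Q > 0\<close> \<open>y > 0\<close> \<open>e > 0\<close>
    unfolding z_def by (metis add.assoc left_diff_distrib)
  also have "\<dots> = F (nat y) * F (nat z) * (shift_ratio F h y - shift_ratio F h z)"
    using shift[OF \<open>y > 0\<close>] shift[OF \<open>z > 0\<close>] by (simp add: algebra_simps)
  also have "cmod \<dots> = cmod (shift_ratio F h y - shift_ratio F h z)"
    using compl_mult_unimod_norm[OF F] \<open>y > 0\<close> \<open>z > 0\<close> by (simp add: norm_mult)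
  finally show ?thesis unfolding z_def .
qed

lemma exists_large_crt_solution:
  fixes U V h B :: int
  assumes "coprime U V" "U > 0" "V > 0"
  obtains c where "c \<ge> B" "U dvd c" "V dvd c + h"
proof -
  obtain s t where st: "s * U + t * V = 1"
    using bezout_int[of U V] assms(1) by (auto simp: coprime_iff_gcd_eq_1)
  define c0 where "c0 = - h * s * U"
  define T where "T = \<bar>c0\<bar> + \<bar>B\<bar>"
  define c where "c = c0 + U * V * T"
  have "U * V \<ge> 1" using assms(2,3) by (simp add: int_one_le_iff_zero_less)
  then have "U * V * T \<ge> T" unfolding T_def by (simp add: mult_le_cancel_right1)
  then have "c \<ge> B" unfolding c_def T_def by linarith
  moreover have "U dvd c" unfolding c_def c0_def by simp
  moreover have "V dvd c + h"
  proof -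
    have "c + h = c0 + U * V * T + h * (s * U + t * V)" unfolding c_def using st by simp
    also have "\<dots> = V * (h * t + U * T)" unfolding c0_def by (simp add: algebra_simps)
    finally show ?thesis by simp
  qed
  ultimately show ?thesis by (rule that)
qed

lemma exists_shift_dvd_products:
  fixes a1 a2 G h B :: int
  assumes "coprime a1 a2" "a1 > 0" "a2 > 0" "G > 0"
  obtains c where "c \<ge> B"
    "\<And>e w. e dvd G \<Longrightarrow> a1 * a2 * e dvd w \<Longrightarrow>
       e * a1 dvd (c + w) * (c + w + e + h) \<and> e * a2 dvd (c + w + h) * (c + w + e)"
proof -
  \<comment> \<open>Split \<open>G = X Y\<close> so that \<open>a1 Y\<close> and \<open>a2 X\<close> are coprime; take \<open>c \<equiv> 0 (mod a1 Y)\<close>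
     and \<open>c \<equiv> -h (mod a2 X)\<close>.\<close>
  obtain X Y k where XY: "G = X * Y" "X > 0" "Y > 0" "coprime Y a2" "X dvd a2 ^ k"
    using int_split_coprime_part[OF assms(4)] by blast
  have "coprime (Y * a1) (X * a2)"
    using XY(4,5) assms(1) coprime_divisors[of Y Y X "a2 ^ k"] coprime_divisors[of a1 a1 X "a2 ^ k"]
    by (simp add: coprime_commute)
  moreover have "Y * a1 > 0" "X * a2 > 0" using XY assms by simp_all
  ultimately obtain c where c: "c \<ge> B" "Y * a1 dvd c" "X * a2 dvd c + h"
    using exists_large_crt_solution by blast
  have "e * a1 dvd (c + w) * (c + w + e + h) \<and> e * a2 dvd (c + w + h) * (c + w + e)"
    if eG: "e dvd G" and ew: "a1 * a2 * e dvd w" for e w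
  proof -
    obtain e2 e1 where e: "e = e2 * e1" "e2 dvd X" "e1 dvd Y"
      using division_decomp[of e X Y] eG XY(1) by auto
    have "e1 * a1 dvd a1 * a2 * e" "e2 * a2 dvd a1 * a2 * e" "e2 dvd e" "e1 dvd e"
      unfolding e(1) by simp_all
    then have w: "e1 * a1 dvd w" "e2 * a2 dvd w" "e2 dvd w" "e1 dvd w"
      using ew dvd_trans dvd_mult_right by blast+
    have "e1 * a1 dvd c" "e2 * a2 dvd c + h"
      using c(2,3) e(2,3) mult_dvd_mono[OF _ dvd_refl] dvd_trans by blast+
    then have "e1 dvd c" "e2 dvd c + h" using dvd_mult_left by blast+
    have y: "e1 * a1 dvd c + w" using \<open>e1 * a1 dvd c\<close> w(1) by simp
    have "e2 dvd (c + h) + w + e" using \<open>e2 dvd c + h\<close> w(3) \<open>e2 dvd e\<close> by simp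
    then have zh: "e2 dvd c + w + e + h" by (simp add: ac_simps)
    have "e2 * a2 dvd (c + h) + w" using \<open>e2 * a2 dvd c + h\<close> w(2) by simp
    then have yh: "e2 * a2 dvd c + w + h" by (simp add: ac_simps)
    have z: "e1 dvd c + w + e" using \<open>e1 dvd c\<close> w(4) \<open>e1 dvd e\<close> by simp
    have "e1 * a1 * e2 dvd (c + w) * (c + w + e + h)" using mult_dvd_mono[OF y zh] .
    moreover have "e2 * a2 * e1 dvd (c + w + h) * (c + w + e)" using mult_dvd_mono[OF yh z] .
    ultimately show ?thesis unfolding e(1) by (simp add: ac_simps)
  qed
  with c(1) show ?thesis by (rule that)
qed

lemma exists_quotient_in_progression:
  fixes a1 a2 b d y e :: int
  assumes "coprime a1 a2" "a1 dvd d" "a2 dvd b" "e \<noteq> 0"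
    and "e * a1 dvd y * (y + e + (b - d))" "e * a2 dvd (y + (b - d)) * (y + e)"
  obtains Q where "Q * e = y * (y + e + (b - d))" "(Q + (b - d)) * e = (y + (b - d)) * (y + e)"
    "a1 * a2 dvd Q - d"
proof -
  define h where "h = b - d"
  obtain Q' where Q': "y * (y + e + h) = e * a1 * Q'" using assms(5) unfolding h_def by blast
  define Q where "Q = a1 * Q'"
  have Q: "Q * e = y * (y + e + h)" unfolding Q_def Q' by (simp add: ac_simps)
  have QP: "(Q + h) * e = (y + h) * (y + e)" using Q by (simp add: algebra_simps)
  have "e * a2 dvd (Q + h) * e" using assms(6) QP unfolding h_def by simp
  then have "a2 dvd Q + h" using assms(4) by (simp add: mult.commute)
  moreover have "Q - d = (Q + h) - b" unfolding h_def by simp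
  ultimately have "a2 dvd Q - d" using assms(3) by (metis dvd_diff)
  moreover have "a1 dvd Q - d" unfolding Q_def using assms(2) by simp
  ultimately have "a1 * a2 dvd Q - d" using assms(1) by (simp add: divides_mult)
  with Q QP show ?thesis unfolding h_def by (rule that)
qed

lemma exists_progression_index:
  fixes a N :: nat and d Q :: int
  assumes "a \<ge> 1" "int a dvd Q - d" "Q - d > int a * int N"
  obtains n where "n \<ge> N" "int a * int n + d = Q"
proof -
  obtain m where m: "Q - d = int a * m" using assms(2) by blast
  then have "m > int N" using assms(1,3) by (simp add: mult_less_cancel_left)
  then show ?thesis using m by (intro that[of "nat m"]) auto
qed

lemma exists_index_diff_eq_shift_ratio_diff:
  fixes a N :: nat and a1 a2 b d y e :: int
  assumes "a \<ge> 1" "int a = a1 * a2" "coprime a1 a2" "a1 dvd d" "a2 dvd b" "d < b"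
    and "y > \<bar>d\<bar> + int a * int N" "e > 0"
    and "e * a1 dvd y * (y + e + (b - d))" "e * a2 dvd (y + (b - d)) * (y + e)"
  obtains n where "n \<ge> N"
    "\<And>F. compl_mult_unimod F \<Longrightarrow> cmod (F (nat (int a * int n + b)) - F (nat (int a * int n + d)))
       = cmod (shift_ratio F (b - d) y - shift_ratio F (b - d) (y + e))"
proof -
  have "int a * int N \<ge> 0" by simp
  then have "y > 0" using assms(7) by linarith
  obtain Q where Q: "Q * e = y * (y + e + (b - d))" "(Q + (b - d)) * e = (y + (b - d)) * (y + e)"
    "int a dvd Q - d"
    using exists_quotient_in_progression[OF assms(3-5) _ assms(9,10)] assms(2,8) by auto
  have "y * e \<le> Q * e" unfolding Q(1) using assms(6,8) \<open>y > 0\<close> by (intro mult_left_mono) auto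
  then have "Q - d > int a * int N" using assms(7,8) by simp
  then obtain n where n: "n \<ge> N" "int a * int n + d = Q"
    using exists_progression_index[OF assms(1) Q(3)] by blast
  have "(int a * int n + b) * e = (y + (b - d)) * (y + e)" "(int a * int n + d) * e = y * (y + e + (b - d))"
    using Q(1,2) unfolding n(2)[symmetric] by (simp_all add: algebra_simps)
  then show ?thesis
    using that[OF n(1)] compl_mult_unimod_diff_eq_shift_ratio_diff[OF _ \<open>y > 0\<close> assms(8)] assms(6)
    by simp
qed

lemma exists_close_values_in_progression:
  fixes a N :: nat and b d :: int and J :: "'j set" and f :: "'j \<Rightarrow> nat \<Rightarrow> complex"
    and \<epsilon> :: real
  assumes "a \<ge> 1" "int a dvd lcm b d" "d < b" "finite J" "\<epsilon> > 0"
    and f: "\<And>j. j \<in> J \<Longrightarrow> compl_mult_unimod (f j)"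
  shows "\<exists>n\<ge>N. \<forall>j\<in>J. cmod (f j (nat (int a * int n + b)) - f j (nat (int a * int n + d))) < \<epsilon>"
proof -
  define h where "h = b - d"
  obtain a1 a2 where a: "int a = a1 * a2" "a1 > 0" "a2 > 0" "coprime a1 a2" "a1 dvd d" "a2 dvd b"
    using dvd_lcm_imp_coprime_factors[of "int a" b d] assms(1,2) by auto
  obtain K where K: "\<And>S (g :: 'j \<Rightarrow> int \<Rightarrow> complex). finite S \<Longrightarrow> card S \<ge> K \<Longrightarrow>
      (\<And>j s. j \<in> J \<Longrightarrow> s \<in> S \<Longrightarrow> cmod (g j s) \<le> 1) \<Longrightarrow>
      \<exists>s\<in>S. \<exists>t\<in>S. s < t \<and> (\<forall>j\<in>J. cmod (g j s - g j t) < \<epsilon>)"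
    using pigeonhole_unit_disc[OF assms(4,5)] by metis
  obtain W where W: "finite W" "card W = K" "\<forall>w\<in>W. w > 0"
    "\<forall>w\<in>W. \<forall>w'\<in>W. w < w' \<longrightarrow> int a * (w' - w) dvd w"
    using exists_set_diff_dvd[of "int a" K] assms(1) by auto
  have "\<Prod>W > 0" using W(3) by (simp add: prod_pos)
  obtain c where c: "c \<ge> \<bar>d\<bar> + int a * int N"
    and c_dvd: "\<And>e w. e dvd \<Prod>W \<Longrightarrow> a1 * a2 * e dvd w \<Longrightarrow>
       e * a1 dvd (c + w) * (c + w + e + h) \<and> e * a2 dvd (c + w + h) * (c + w + e)"
    using exists_shift_dvd_products[OF a(4,2,3) \<open>\<Prod>W > 0\<close>, where B = "\<bar>d\<bar> + int a * int N"]
    by blast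
  have big: "c + w > \<bar>d\<bar> + int a * int N" if "w \<in> W" for w using c W(3) that by force
  have "int a * int N \<ge> 0" by simp
  have "cmod (shift_ratio (f j) h (c + w)) \<le> 1" if "j \<in> J" "w \<in> W" for j w
  proof -
    have "c + w > 0" using big[OF that(2)] \<open>int a * int N \<ge> 0\<close> by linarith
    then show ?thesis using shift_ratio_norm[OF f[OF that(1)]] assms(3) unfolding h_def by simp
  qed
  then obtain w w' where ww: "w \<in> W" "w' \<in> W" "w < w'"
    and close: "\<forall>j\<in>J. cmod (shift_ratio (f j) h (c + w) - shift_ratio (f j) h (c + w')) < \<epsilon>"
    using K[OF W(1), of "\<lambda>j w. shift_ratio (f j) h (c + w)"] W(2) by blast
  define e where "e = w' - w"
  have "a1 * a2 * e dvd w" using W(4) ww a(1) unfolding e_def by simp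
  moreover have "e dvd \<Prod>W"
    using calculation dvd_mult_right dvd_prodI[OF W(1) ww(1), of "\<lambda>x. x"] dvd_trans by blast
  ultimately have "e * a1 dvd (c + w) * (c + w + e + h)" "e * a2 dvd (c + w + h) * (c + w + e)"
    using c_dvd by blast+
  moreover have "e > 0" unfolding e_def using ww by simp
  ultimately obtain n where "n \<ge> N"
    "\<And>F. compl_mult_unimod F \<Longrightarrow> cmod (F (nat (int a * int n + b)) - F (nat (int a * int n + d)))
       = cmod (shift_ratio F h (c + w) - shift_ratio F h (c + w + e))"
    using exists_index_diff_eq_shift_ratio_diff[OF assms(1) a(1,4-6) assms(3) big[OF ww(1)]]
    unfolding h_def by blast
  moreover have "c + w + e = c + w'" unfolding e_def by simp
  ultimately show ?thesis using close f by auto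
qed

lemma frequently_close_values_in_progression:
  fixes a :: nat and b d :: int and J :: "'j set" and f :: "'j \<Rightarrow> nat \<Rightarrow> complex"
    and \<epsilon> :: real
  assumes "a \<ge> 1" "int a dvd lcm b d" "finite J" "\<epsilon> > 0"
    and "\<And>j. j \<in> J \<Longrightarrow> compl_mult_unimod (f j)"
  shows "\<exists>\<^sub>F n in sequentially.
           \<forall>j\<in>J. cmod (f j (nat (int a * int n + b)) - f j (nat (int a * int n + d))) < \<epsilon>"
  unfolding frequently_sequentially
proof
  fix N
  consider "d < b" | "b < d" | "b = d" by linarith
  then show "\<exists>n\<ge>N. \<forall>j\<in>J. cmod (f j (nat (int a * int n + b)) - f j (nat (int a * int n + d))) < \<epsilon>"
  proof cases
    case 1
    then show ?thesis using exists_close_values_in_progression assms by blast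
  next
    case 2
    moreover have "int a dvd lcm d b" using assms(2) by (simp add: lcm.commute)
    ultimately obtain n where "n \<ge> N"
      "\<forall>j\<in>J. cmod (f j (nat (int a * int n + d)) - f j (nat (int a * int n + b))) < \<epsilon>"
      using exists_close_values_in_progression[of a d b J \<epsilon> f N] assms(1,3-5) by blast
    then show ?thesis by (metis norm_minus_commute)
  next
    case 3
    then show ?thesis using assms(4) by auto
  qed
qed

lemma liminf_eq_0_if_frequently_small:
  fixes X :: "nat \<Rightarrow> real"
  assumes "\<And>n. X n \<ge> 0" and "\<And>\<epsilon>. \<epsilon> > 0 \<Longrightarrow> \<exists>\<^sub>F n in sequentially. X n < \<epsilon>"
  shows "liminf (\<lambda>n. ereal (X n)) = 0"
proof (rule antisym)
  show "liminf (\<lambda>n. ereal (X n)) \<le> 0"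
  proof (rule ccontr)
    assume "\<not> liminf (\<lambda>n. ereal (X n)) \<le> 0"
    then have "0 < liminf (\<lambda>n. ereal (X n))" by simp
    then obtain \<epsilon> where "0 < ereal \<epsilon>" and \<epsilon>: "ereal \<epsilon> < liminf (\<lambda>n. ereal (X n))"
      using ereal_dense2 by blast
    have "\<forall>\<^sub>F n in sequentially. ereal \<epsilon> < ereal (X n)" using \<epsilon> by (rule less_LiminfD)
    then obtain N where "\<forall>n\<ge>N. \<epsilon> < X n" unfolding eventually_sequentially by auto
    moreover obtain n where "n \<ge> N" "X n < \<epsilon>"
      using assms(2)[of \<epsilon>] \<open>0 < ereal \<epsilon>\<close> unfolding frequently_sequentially by auto
    ultimately show False by fastforce
  qed
  show "0 \<le> liminf (\<lambda>n. ereal (X n))" by (rule Liminf_bounded) (simp add: assms(1))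
qed

theorem corollary1p3:
  fixes r a :: nat and b d :: int and f :: "nat \<Rightarrow> nat \<Rightarrow> complex"
  assumes "r \<ge> 1" and "a \<ge> 1"
    and "int a dvd lcm b d"
    and "\<And>j. j \<in> {1..r} \<Longrightarrow> compl_mult_unimod (f j)"
  shows "liminf (\<lambda>n::nat. ereal (Max ((\<lambda>j. cmod (f j (nat (int a * int n + b))
                                      - f j (nat (int a * int n + d)))) ` {1..r}))) = 0"
proof -
  have "{1..r} \<noteq> {}" using assms(1) by simp
  show ?thesis
  proof (rule liminf_eq_0_if_frequently_small)
    show "Max ((\<lambda>j. cmod (f j (nat (int a * int n + b)) - f j (nat (int a * int n + d)))) ` {1..r})
        \<ge> 0" for n
      using assms(1) by (auto simp: Max_ge_iff intro!: bexI[of _ 1])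
    show "\<exists>\<^sub>F n in sequentially. Max ((\<lambda>j. cmod (f j (nat (int a * int n + b))
        - f j (nat (int a * int n + d)))) ` {1..r}) < \<epsilon>" if "\<epsilon> > 0" for \<epsilon>
      using frequently_close_values_in_progression[of a b d "{1..r}" \<epsilon> f] assms(2-4) that
        \<open>{1..r} \<noteq> {}\<close>
      by (simp add: Max_less_iff)
  qed
qed

end
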